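(* Define, for $0<v<1$, $$C(v)=\int_1^\infty\frac{L(u)\,\ell(u,v)}{(u^2-v^2)^2}\,du.$$ Then: (i) as $v\downarrow0$, $C(v)=c_0\log\frac1v+d_0+O\big(v^2\log(1/v)\big)$, where $c_0=\int_1^\infty\frac{L(u)}{u^4}du$ and $d_0=\int_1^\infty\frac{L(u)\log(1/u)}{u^4}du$; (ii) $C\in L^1(0,1)$ and $vC(v)\in L^1(0,1)$; (iii) as $y\to\infty$, $$\int_0^1C(v)\cos(vy)\,dv=O\Big(\frac{(\log y)^2}{y}\Big),\qquad\int_0^1vC(v)\sin(vy)\,dv=O\Big(\frac{(\log y)^2}{y}\Big).$$
   Context: For $u>1$ let $L(u)=\log\frac{u+1}{u-1}$, and for $u\ge1$, $0<v\le1$ let $\ell(u,v)=\log\frac{1}{uv}$. *)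

theory Defs
  imports "HOL-Analysis.Analysis" "HOL-Library.Landau_Symbols"
begin

definition Lf :: "real \<Rightarrow> real" where
  "Lf u = ln ((u + 1) / (u - 1))"

definition ellf :: "real \<Rightarrow> real \<Rightarrow> real" where
  "ellf u v = ln (1 / (u * v))"

definition Cint :: "real \<Rightarrow> real \<Rightarrow> real" where
  "Cint v u = Lf u * ellf u v / (u\<^sup>2 - v\<^sup>2)\<^sup>2"

definition Cf :: "real \<Rightarrow> real" where
  "Cf v = (LBINT u:{1<..}. Cint v u)"

definition c0 :: real where
  "c0 = (LBINT u:{1<..}. Lf u / u ^ 4)"

definition d0 :: real where
  "d0 = (LBINT u:{1<..}. Lf u * ln (1 / u) / u ^ 4)"

end

theory Submission
  imports Defs "HOL-Real_Asymp.Real_Asymp"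
begin

text \<open>
  Write C(v) = ln(1/v) A(v) - B(v), where A = Af and B = Bf integrate L(u)/(u^2 - v^2)^2 against the
  weights 1 and ln u; both are nonnegative and increasing in v. Near v = 0 the estimate
  u^4 \<le> (1 + 4 v^2) (u^2 - v^2)^2 gives A(v) - A(0), B(v) - B(0) = O(v^2), which is (i). Near v = 1,
  splitting the u-integral at 2 - v and 2 gives A(v) = O(log(1/(1-v))/(1-v)) and
  B(v) = O(log^2(1/(1-v))), so the majorant g = ln(1/v) A + B of |C| is integrable on (0,1), which is (ii).

  For (iii), the monotonicity of A, B and ln(1/v) gives
  |C(v+h) - C(v)| \<le> g(v+h) - g(v) + 2 ln(1+h/v) A(v). The g-terms telescope after integration, so the
  L1 modulus of continuity of C (extended by zero outside (0,1)) is O(h log^2(1/h)). Since cos and sin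
  change sign under a shift by pi, the integral of C(v) cos(vy) is at most half the L1 distance between C
  and its translate by pi/y, which is O(log^2 y / y); the same applies to v C(v) and sin.
\<close>

lemma ln_three_le_two: "ln (3::real) \<le> 2"
  using ln_le_minus_one[of 3] by simp

lemma ln_weighted_ratio_le:
  fixes c s t :: real
  assumes "0 < t" "t < s" "s \<le> c"
  shows "(ln c - ln t) * t / s \<le> ln c - ln s + 1"
proof -
  define r where "r = t / s"
  have r: "0 < r" "r \<le> 1" "ln t = ln r + ln s"
    using assms by (auto simp: r_def ln_div)
  have "- ln r \<le> 1 / r - 1"
    using ln_le_minus_one[of "1 / r"] r by (simp add: ln_div)
  then have "- r * ln r \<le> 1"
    using r by (simp add: field_simps)
  moreover have "r * (ln c - ln s) \<le> ln c - ln s"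
    using r assms by (intro mult_left_le_one_le) auto
  moreover have "(ln c - ln t) * t / s = r * (ln c - ln s) - r * ln r"
    using r assms by (simp add: r_def field_simps)
  ultimately show ?thesis
    by linarith
qed

lemma one_minus_ln_pi_div_le:
  fixes y :: real
  assumes "pi \<le> y"
  shows "(1 - ln (pi / y))\<^sup>2 \<le> (ln y)\<^sup>2"
proof (rule power_mono)
  have y: "0 < y"
    using assms pi_gt_zero by linarith
  have "1 \<le> ln pi"
    using exp_le pi_gt3 by (subst ln_ge_iff) auto
  then show "1 - ln (pi / y) \<le> ln y"
    using y by (simp add: ln_div)
  have "ln (pi / y) \<le> 0"
    using assms y by simp
  then show "0 \<le> 1 - ln (pi / y)"
    by linarith
qed

lemma abs_diff_le_of_monotone:
  fixes p0 p1 a0 a1 b0 b1 :: real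
  assumes "0 \<le> p1" "p1 \<le> p0" "0 \<le> a0" "a0 \<le> a1" "b0 \<le> b1"
  shows "\<bar>(p1 * a1 - b1) - (p0 * a0 - b0)\<bar> \<le> (p1 * a1 + b1) - (p0 * a0 + b0) + 2 * ((p0 - p1) * a0)"
proof -
  define X Y Z where "X = p1 * (a1 - a0)" and "Y = (p0 - p1) * a0" and "Z = b1 - b0"
  have "0 \<le> X" "0 \<le> Y" "0 \<le> Z"
    using assms by (simp_all add: X_def Y_def Z_def)
  moreover have "(p1 * a1 - b1) - (p0 * a0 - b0) = X - Y - Z"
    and "(p1 * a1 + b1) - (p0 * a0 + b0) + 2 * ((p0 - p1) * a0) = X + Y + Z"
    by (simp_all add: X_def Y_def Z_def algebra_simps)
  ultimately show ?thesis
    by (simp add: abs_le_iff)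
qed

lemma FTC_nonneg_Ioo:
  fixes f F :: "real \<Rightarrow> real"
  assumes "a < b"
    and "\<And>x. a < x \<Longrightarrow> x < b \<Longrightarrow> DERIV F x :> f x"
    and "\<And>x. a < x \<Longrightarrow> x < b \<Longrightarrow> isCont f x"
    and "\<And>x. a < x \<Longrightarrow> x < b \<Longrightarrow> 0 \<le> f x"
    and "(F \<longlongrightarrow> A) (at_right a)" "(F \<longlongrightarrow> B) (at_left b)"
  shows "set_integrable lborel {a<..<b} f" "(LBINT x:{a<..<b}. f x) = B - A"
  using interval_integral_FTC_nonneg[of "ereal a" "ereal b" F f A B] assms
  by (auto simp: ereal_tendsto_simps1 interval_integral_Ioo)

lemma FTC_nonneg_Ioi:
  fixes f F :: "real \<Rightarrow> real"
  assumes "\<And>x. a < x \<Longrightarrow> DERIV F x :> f x"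
    and "\<And>x. a < x \<Longrightarrow> isCont f x"
    and "\<And>x. a < x \<Longrightarrow> 0 \<le> f x"
    and "(F \<longlongrightarrow> A) (at_right a)" "(F \<longlongrightarrow> B) at_top"
  shows "set_integrable lborel {a<..} f" "(LBINT x:{a<..}. f x) = B - A"
  using interval_integral_FTC_nonneg[of "ereal a" \<infinity> F f A B] assms
  by (auto simp: ereal_tendsto_simps1 interval_integral_to_infinity_eq)

lemma integral_ln_singularity:
  fixes a c x0 :: real
  assumes "0 < a" "a \<le> c"
  shows "set_integrable lborel {x0<..<x0+a} (\<lambda>u. ln (c / (u - x0)))"
    and "(LBINT u:{x0<..<x0+a}. ln (c / (u - x0))) = a * (1 + ln (c / a))"
proof -
  define F where "F u = (u - x0) * (1 + ln (c / (u - x0)))" for u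
  have "DERIV F u :> ln (c / (u - x0))" if "x0 < u" "u < x0 + a" for u
    using that assms unfolding F_def by (auto intro!: derivative_eq_intros simp: divide_simps)
  moreover have "isCont (\<lambda>u. ln (c / (u - x0))) u" if "x0 < u" "u < x0 + a" for u
    using that assms by (auto intro!: continuous_intros)
  moreover have "0 \<le> ln (c / (u - x0))" if "x0 < u" "u < x0 + a" for u
    using that assms by (simp add: field_simps)
  moreover have "(F \<longlongrightarrow> 0) (at_right x0)"
    unfolding F_def using assms by real_asymp
  moreover have "(F \<longlongrightarrow> a * (1 + ln (c / a))) (at_left (x0 + a))"
    unfolding F_def using assms by (intro tendsto_eq_intros refl) auto
  ultimately show "set_integrable lborel {x0<..<x0+a} (\<lambda>u. ln (c / (u - x0)))"
    "(LBINT u:{x0<..<x0+a}. ln (c / (u - x0))) = a * (1 + ln (c / a))"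
    using FTC_nonneg_Ioo[of x0 "x0 + a" F "\<lambda>u. ln (c / (u - x0))" 0] assms by auto
qed

lemma integral_inverse_square:
  fixes a b c x0 :: real
  assumes "x0 < a" "a < b" "0 \<le> c"
  shows "set_integrable lborel {a<..<b} (\<lambda>u. c / (u - x0)\<^sup>2)"
    and "(LBINT u:{a<..<b}. c / (u - x0)\<^sup>2) = c / (a - x0) - c / (b - x0)"
proof -
  define F where "F u = - c / (u - x0)" for u
  have "DERIV F u :> c / (u - x0)\<^sup>2" if "a < u" "u < b" for u
    using that assms unfolding F_def
    by (auto intro!: derivative_eq_intros simp: field_simps power2_eq_square)
  moreover have "isCont (\<lambda>u. c / (u - x0)\<^sup>2) u" if "a < u" "u < b" for u
    using that assms by (auto intro!: continuous_intros)
  moreover have "(F \<longlongrightarrow> F a) (at_right a)" "(F \<longlongrightarrow> F b) (at_left b)"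
    unfolding F_def using assms by (auto intro!: tendsto_eq_intros)
  ultimately show "set_integrable lborel {a<..<b} (\<lambda>u. c / (u - x0)\<^sup>2)"
    "(LBINT u:{a<..<b}. c / (u - x0)\<^sup>2) = c / (a - x0) - c / (b - x0)"
    using FTC_nonneg_Ioo[of a b F "\<lambda>u. c / (u - x0)\<^sup>2" "F a" "F b"] assms
    by (auto simp: F_def)
qed

lemma integral_inverse_cube_Ioi:
  fixes a c :: real
  assumes "0 < a" "0 \<le> c"
  shows "set_integrable lborel {a<..} (\<lambda>u. c / u ^ 3)"
    and "(LBINT u:{a<..}. c / u ^ 3) = c / (2 * a\<^sup>2)"
proof -
  define F where "F u = - c / (2 * u\<^sup>2)" for u :: real
  have "DERIV F u :> c / u ^ 3" if "a < u" for u
    using that assms unfolding F_def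
    by (auto intro!: derivative_eq_intros simp: field_simps power2_eq_square power3_eq_cube)
  moreover have "isCont (\<lambda>u. c / u ^ 3) u" if "a < u" for u
    using that assms by (auto intro!: continuous_intros)
  moreover have "(F \<longlongrightarrow> F a) (at_right a)"
    unfolding F_def using assms by (auto intro!: tendsto_eq_intros)
  moreover have "(F \<longlongrightarrow> 0) at_top"
    unfolding F_def by real_asymp
  ultimately show "set_integrable lborel {a<..} (\<lambda>u. c / u ^ 3)"
    "(LBINT u:{a<..}. c / u ^ 3) = c / (2 * a\<^sup>2)"
    using FTC_nonneg_Ioi[of a F "\<lambda>u. c / u ^ 3" "F a" 0] assms by (auto simp: F_def)
qed

lemma integral_ln_over_linear:
  fixes a b c x0 :: real
  assumes "x0 < a" "a < b" "ln (b - x0) \<le> c"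
  shows "set_integrable lborel {a<..<b} (\<lambda>u. (c - ln (u - x0)) / (u - x0))"
    and "(LBINT u:{a<..<b}. (c - ln (u - x0)) / (u - x0))
           = ((c - ln (a - x0))\<^sup>2 - (c - ln (b - x0))\<^sup>2) / 2"
proof -
  define F where "F u = - (c - ln (u - x0))\<^sup>2 / 2" for u
  have "DERIV F u :> (c - ln (u - x0)) / (u - x0)" if "a < u" "u < b" for u
    using that assms unfolding F_def
    by (auto intro!: derivative_eq_intros simp: divide_simps) (simp add: algebra_simps)
  moreover have "isCont (\<lambda>u. (c - ln (u - x0)) / (u - x0)) u" if "a < u" "u < b" for u
    using that assms by (auto intro!: continuous_intros)
  moreover have "0 \<le> (c - ln (u - x0)) / (u - x0)" if "a < u" "u < b" for u
  proof -
    have "ln (u - x0) \<le> ln (b - x0)" using that assms by simp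
    also note assms(3)
    finally show ?thesis using that assms by simp
  qed
  moreover have "(F \<longlongrightarrow> F a) (at_right a)" "(F \<longlongrightarrow> F b) (at_left b)"
    unfolding F_def using assms by (auto intro!: tendsto_eq_intros)
  ultimately show "set_integrable lborel {a<..<b} (\<lambda>u. (c - ln (u - x0)) / (u - x0))"
    "(LBINT u:{a<..<b}. (c - ln (u - x0)) / (u - x0)) = ((c - ln (a - x0))\<^sup>2 - (c - ln (b - x0))\<^sup>2) / 2"
    using FTC_nonneg_Ioo[of a b F "\<lambda>u. (c - ln (u - x0)) / (u - x0)" "F a" "F b"] assms
    by (auto simp: F_def diff_divide_distrib)
qed

lemma integral_ln_over_linear_left:
  fixes a b c x0 :: real
  assumes "a < b" "b < x0" "ln (x0 - a) \<le> c"
  shows "set_integrable lborel {a<..<b} (\<lambda>u. (c - ln (x0 - u)) / (x0 - u))"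
    and "(LBINT u:{a<..<b}. (c - ln (x0 - u)) / (x0 - u))
           = ((c - ln (x0 - b))\<^sup>2 - (c - ln (x0 - a))\<^sup>2) / 2"
proof -
  define F where "F u = (c - ln (x0 - u))\<^sup>2 / 2" for u
  have "DERIV F u :> (c - ln (x0 - u)) / (x0 - u)" if "a < u" "u < b" for u
    using that assms unfolding F_def
    by (auto intro!: derivative_eq_intros simp: divide_simps) (simp add: algebra_simps)
  moreover have "isCont (\<lambda>u. (c - ln (x0 - u)) / (x0 - u)) u" if "a < u" "u < b" for u
    using that assms by (auto intro!: continuous_intros)
  moreover have "0 \<le> (c - ln (x0 - u)) / (x0 - u)" if "a < u" "u < b" for u
  proof -
    have "ln (x0 - u) \<le> ln (x0 - a)" using that assms by simp
    also note assms(3)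
    finally show ?thesis using that assms by simp
  qed
  moreover have "(F \<longlongrightarrow> F a) (at_right a)" "(F \<longlongrightarrow> F b) (at_left b)"
    unfolding F_def using assms by (auto intro!: tendsto_eq_intros)
  ultimately show "set_integrable lborel {a<..<b} (\<lambda>u. (c - ln (x0 - u)) / (x0 - u))"
    "(LBINT u:{a<..<b}. (c - ln (x0 - u)) / (x0 - u)) = ((c - ln (x0 - b))\<^sup>2 - (c - ln (x0 - a))\<^sup>2) / 2"
    using FTC_nonneg_Ioo[of a b F "\<lambda>u. (c - ln (x0 - u)) / (x0 - u)" "F a" "F b"] assms
    by (auto simp: F_def diff_divide_distrib)
qed

lemma integral_ln_square_near_one:
  fixes h :: real
  assumes "0 < h" "h \<le> 1"
  shows "set_integrable lborel {1-h<..<1} (\<lambda>v. (1 - ln (1 - v))\<^sup>2)"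
    and "(LBINT v:{1-h<..<1}. (1 - ln (1 - v))\<^sup>2) = h * ((1 - ln h)\<^sup>2 + 2 * (1 - ln h) + 2)"
proof -
  define F where "F v = - (1 - v) * ((1 - ln (1 - v))\<^sup>2 + 2 * (1 - ln (1 - v)) + 2)" for v :: real
  have "DERIV F v :> (1 - ln (1 - v))\<^sup>2" if "1 - h < v" "v < 1" for v
    using that unfolding F_def
    by (auto intro!: derivative_eq_intros simp: divide_simps) (simp add: algebra_simps power2_eq_square)
  moreover have "isCont (\<lambda>v. (1 - ln (1 - v))\<^sup>2) v" if "1 - h < v" "v < 1" for v
    using that by (auto intro!: continuous_intros)
  moreover have "(F \<longlongrightarrow> - h * ((1 - ln h)\<^sup>2 + 2 * (1 - ln h) + 2)) (at_right (1 - h))"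
    unfolding F_def using assms by (auto intro!: tendsto_eq_intros)
  moreover have "(F \<longlongrightarrow> 0) (at_left 1)"
    unfolding F_def by real_asymp
  ultimately show "set_integrable lborel {1-h<..<1} (\<lambda>v. (1 - ln (1 - v))\<^sup>2)"
    "(LBINT v:{1-h<..<1}. (1 - ln (1 - v))\<^sup>2) = h * ((1 - ln h)\<^sup>2 + 2 * (1 - ln h) + 2)"
    using FTC_nonneg_Ioo[of "1 - h" 1 F "\<lambda>v. (1 - ln (1 - v))\<^sup>2"] assms by auto
qed

lemma integral_ln_one_plus_inverse:
  fixes a h :: real
  assumes "0 < a" "0 < h"
  shows "set_integrable lborel {0<..<a} (\<lambda>v. ln (1 + h / v))"
    and "(LBINT v:{0<..<a}. ln (1 + h / v)) = (a + h) * ln (a + h) - a * ln a - h * ln h"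
proof -
  define F where "F v = (v + h) * ln (v + h) - v * ln v" for v
  have "DERIV F v :> ln (1 + h / v)" if "0 < v" "v < a" for v
  proof -
    have "ln (1 + h / v) = ln (v + h) - ln v"
      using that assms by (simp add: ln_div field_simps)
    then show ?thesis
      using that assms unfolding F_def by (auto intro!: derivative_eq_intros)
  qed
  moreover have "isCont (\<lambda>v. ln (1 + h / v)) v" if "0 < v" "v < a" for v
  proof -
    have "0 < 1 + h / v" using that assms by (simp add: add_pos_pos)
    with that show ?thesis by (auto intro!: continuous_intros)
  qed
  moreover have "0 \<le> ln (1 + h / v)" if "0 < v" "v < a" for v
    using that assms by simp
  moreover have "(F \<longlongrightarrow> h * ln h) (at_right 0)"
    unfolding F_def using assms by real_asymp
  moreover have "(F \<longlongrightarrow> F a) (at_left a)"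
    unfolding F_def using assms by (auto intro!: tendsto_eq_intros)
  ultimately show "set_integrable lborel {0<..<a} (\<lambda>v. ln (1 + h / v))"
    "(LBINT v:{0<..<a}. ln (1 + h / v)) = (a + h) * ln (a + h) - a * ln a - h * ln h"
    using FTC_nonneg_Ioo[of 0 a F "\<lambda>v. ln (1 + h / v)" "h * ln h" "F a"] assms
    by (auto simp: F_def)
qed

lemma integral_ln_one_plus_inverse_half_le:
  fixes h :: real
  assumes "0 < h" "h \<le> 1/2"
  shows "(LBINT v:{0<..<1/2}. ln (1 + h / v)) \<le> h * (1 - ln h)"
proof -
  have "ln (1/2 + h) \<le> 0"
    using assms by simp
  then have "h * ln (1/2 + h) \<le> 0"
    using assms by (simp add: mult_nonneg_nonpos)
  moreover have "ln (1/2 + h) - ln (1/2) \<le> 2 * h"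
  proof -
    have "ln (1/2 + h) - ln (1/2) = ln ((1/2 + h) / (1/2))"
      using assms by (subst ln_div) auto
    also have "\<dots> = ln (1 + 2 * h)"
      by (rule arg_cong[where f=ln]) (simp add: field_simps)
    also have "\<dots> \<le> 2 * h"
      using assms by (intro ln_add_one_self_le_self) auto
    finally show ?thesis .
  qed
  ultimately have "(1/2 + h) * ln (1/2 + h) - 1/2 * ln (1/2) - h * ln h \<le> h * (1 - ln h)"
    by (simp add: algebra_simps)
  then show ?thesis
    using integral_ln_one_plus_inverse(2)[of "1/2" h] assms by simp
qed

lemma integral_ln_over_one_minus_le:
  fixes h :: real
  assumes "0 < h" "h < 1/2"
  shows "set_integrable lborel {1/2<..<1-h} (\<lambda>v. (1 - ln (1 - v)) / (1 - v))"
    and "(LBINT v:{1/2<..<1-h}. (1 - ln (1 - v)) / (1 - v)) \<le> (1 - ln h)\<^sup>2 / 2"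
proof -
  have "ln (1 - 1/2 :: real) < 0"
    by simp
  then have "ln (1 - 1/2) \<le> (1::real)"
    by linarith
  note log_integral = integral_ln_over_linear_left[of "1/2" "1 - h" 1 1, OF _ _ this]
  show "set_integrable lborel {1/2<..<1-h} (\<lambda>v. (1 - ln (1 - v)) / (1 - v))"
    using log_integral(1) assms by simp
  show "(LBINT v:{1/2<..<1-h}. (1 - ln (1 - v)) / (1 - v)) \<le> (1 - ln h)\<^sup>2 / 2"
    using log_integral(2) assms by simp
qed

lemma set_integral_split_Ioo:
  fixes f :: "real \<Rightarrow> real"
  assumes "a < b" "b < c" "set_integrable lborel {a<..<b} f" "set_integrable lborel {b<..<c} f"
  shows "set_integrable lborel {a<..<c} f"
    and "(LBINT x:{a<..<c}. f x) = (LBINT x:{a<..<b}. f x) + (LBINT x:{b<..<c}. f x)"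
proof -
  have D: "({a<..<c} - ({a<..<b} \<union> {b<..<c})) \<union> (({a<..<b} \<union> {b<..<c}) - {a<..<c}) \<subseteq> {b}"
    using assms by (auto; linarith)
  have "set_integrable lborel ({a<..<b} \<union> {b<..<c}) f"
    using assms by (intro set_integrable_Un) auto
  then show "set_integrable lborel {a<..<c} f"
    by (subst set_integrable_discrete_difference[OF _ D]) auto
  have "(LBINT x:{a<..<c}. f x) = (LBINT x:{a<..<b} \<union> {b<..<c}. f x)"
    by (rule set_integral_discrete_difference[OF _ D]) auto
  also have "\<dots> = (LBINT x:{a<..<b}. f x) + (LBINT x:{b<..<c}. f x)"
    using assms by (intro set_integral_Un) auto
  finally show "(LBINT x:{a<..<c}. f x) = (LBINT x:{a<..<b}. f x) + (LBINT x:{b<..<c}. f x)" .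
qed

lemma set_integral_split_Ioi:
  fixes f :: "real \<Rightarrow> real"
  assumes "a < b" "set_integrable lborel {a<..<b} f" "set_integrable lborel {b<..} f"
  shows "set_integrable lborel {a<..} f"
    and "(LBINT x:{a<..}. f x) = (LBINT x:{a<..<b}. f x) + (LBINT x:{b<..}. f x)"
proof -
  have D: "({a<..} - ({a<..<b} \<union> {b<..})) \<union> (({a<..<b} \<union> {b<..}) - {a<..}) \<subseteq> {b}"
    using assms by (auto; linarith)
  have "set_integrable lborel ({a<..<b} \<union> {b<..}) f"
    using assms by (intro set_integrable_Un) auto
  then show "set_integrable lborel {a<..} f"
    by (subst set_integrable_discrete_difference[OF _ D]) auto
  have "(LBINT x:{a<..}. f x) = (LBINT x:{a<..<b} \<union> {b<..}. f x)"
    by (rule set_integral_discrete_difference[OF _ D]) auto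
  also have "\<dots> = (LBINT x:{a<..<b}. f x) + (LBINT x:{b<..}. f x)"
    using assms by (intro set_integral_Un) auto
  finally show "(LBINT x:{a<..}. f x) = (LBINT x:{a<..<b}. f x) + (LBINT x:{b<..}. f x)" .
qed

lemma set_integral_le_majorant:
  fixes f g :: "'a \<Rightarrow> real"
  assumes "set_integrable M S g" "S \<in> sets M" "f \<in> borel_measurable M"
    and "\<And>x. x \<in> S \<Longrightarrow> 0 \<le> f x" "\<And>x. x \<in> S \<Longrightarrow> f x \<le> g x"
  shows "set_integrable M S f" "(LINT x:S|M. f x) \<le> (LINT x:S|M. g x)"
proof -
  show f: "set_integrable M S f"
    using assms(1)
  proof (rule set_integrable_bound)
    show "set_borel_measurable M S f"
      unfolding set_borel_measurable_def
      by (intro borel_measurable_scaleR borel_measurable_indicator assms(2,3))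
    show "AE x in M. x \<in> S \<longrightarrow> norm (f x) \<le> norm (g x)"
    proof (intro AE_I2 impI)
      fix x assume "x \<in> S"
      with assms(4,5) have "0 \<le> f x" "f x \<le> g x" by auto
      then show "norm (f x) \<le> norm (g x)" by simp
    qed
  qed
  show "(LINT x:S|M. f x) \<le> (LINT x:S|M. g x)"
    using f assms(1,5) by (rule set_integral_mono)
qed

lemma set_integral_Ioo_le_split:
  fixes f g1 g2 :: "real \<Rightarrow> real"
  assumes "a < b" "b < c" "f \<in> borel_measurable borel"
    and "set_integrable lborel {a<..<b} g1" "set_integrable lborel {b<..<c} g2"
    and "\<And>x. a < x \<Longrightarrow> x < b \<Longrightarrow> 0 \<le> f x \<and> f x \<le> g1 x"
    and "\<And>x. b < x \<Longrightarrow> x < c \<Longrightarrow> 0 \<le> f x \<and> f x \<le> g2 x"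
  shows "set_integrable lborel {a<..<c} f"
    and "(LBINT x:{a<..<c}. f x) \<le> (LBINT x:{a<..<b}. g1 x) + (LBINT x:{b<..<c}. g2 x)"
proof -
  have f: "f \<in> borel_measurable lborel"
    using assms(3) by simp
  note piece1 = set_integral_le_majorant[OF assms(4) _ f, simplified]
  note piece2 = set_integral_le_majorant[OF assms(5) _ f, simplified]
  have "set_integrable lborel {a<..<b} f" "set_integrable lborel {b<..<c} f"
    using piece1(1) piece2(1) assms(6,7) by auto
  note split = set_integral_split_Ioo[OF assms(1,2) this]
  show "set_integrable lborel {a<..<c} f"
    by (rule split(1))
  show "(LBINT x:{a<..<c}. f x) \<le> (LBINT x:{a<..<b}. g1 x) + (LBINT x:{b<..<c}. g2 x)"
    unfolding split(2) using piece1(2) piece2(2) assms(6,7) by (intro add_mono) auto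
qed

lemma set_integral_Ioi_le_split:
  fixes f g1 g2 :: "real \<Rightarrow> real"
  assumes "a < b" "f \<in> borel_measurable borel"
    and "set_integrable lborel {a<..<b} g1" "set_integrable lborel {b<..} g2"
    and "\<And>x. a < x \<Longrightarrow> x < b \<Longrightarrow> 0 \<le> f x \<and> f x \<le> g1 x"
    and "\<And>x. b < x \<Longrightarrow> 0 \<le> f x \<and> f x \<le> g2 x"
  shows "set_integrable lborel {a<..} f"
    and "(LBINT x:{a<..}. f x) \<le> (LBINT x:{a<..<b}. g1 x) + (LBINT x:{b<..}. g2 x)"
proof -
  have f: "f \<in> borel_measurable lborel"
    using assms(2) by simp
  note piece1 = set_integral_le_majorant[OF assms(3) _ f, simplified]
  note piece2 = set_integral_le_majorant[OF assms(4) _ f, simplified]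
  have "set_integrable lborel {a<..<b} f" "set_integrable lborel {b<..} f"
    using piece1(1) piece2(1) assms(5,6) by auto
  note split = set_integral_split_Ioi[OF assms(1) this]
  show "set_integrable lborel {a<..} f"
    by (rule split(1))
  show "(LBINT x:{a<..}. f x) \<le> (LBINT x:{a<..<b}. g1 x) + (LBINT x:{b<..}. g2 x)"
    unfolding split(2) using piece1(2) piece2(2) assms(5,6) by (intro add_mono) auto
qed

section \<open>Antiperiodic transforms and the L1 modulus of continuity\<close>

lemma lborel_integrable_shift:
  fixes F :: "real \<Rightarrow> real"
  assumes "integrable lborel F"
  shows "integrable lborel (\<lambda>v. F (v + h))"
  using lborel_integrable_real_affine[OF assms, of 1 h] by (simp add: add.commute)

lemma lborel_integral_shift:
  fixes F :: "real \<Rightarrow> real"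
  shows "(LBINT v. F (v + h)) = (LBINT v. F v)"
  using lborel_integral_real_affine[of 1 F h] by (simp add: add.commute)

lemma abs_integral_antiperiodic_le:
  fixes F \<phi> :: "real \<Rightarrow> real" and y :: real
  assumes F: "integrable lborel F" and y: "0 < y"
    and \<phi>_meas: "\<phi> \<in> borel_measurable borel"
    and \<phi>_bound: "\<And>x. \<bar>\<phi> x\<bar> \<le> 1"
    and \<phi>_anti: "\<And>x. \<phi> (x + pi) = - \<phi> x"
  shows "\<bar>LBINT v. F v * \<phi> (v * y)\<bar> \<le> 1/2 * (LBINT v. \<bar>F (v + pi / y) - F v\<bar>)"
proof -
  have [measurable]: "\<phi> \<in> borel_measurable lborel"
    using \<phi>_meas by simp
  have times_\<phi>: "integrable lborel (\<lambda>v. G v * \<phi> (v * y))" if G: "integrable lborel G" for G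
  proof (rule Bochner_Integration.integrable_bound[OF integrable_abs[OF G]])
    have [measurable]: "G \<in> borel_measurable lborel"
      using G by (rule borel_measurable_integrable)
    show "(\<lambda>v. G v * \<phi> (v * y)) \<in> borel_measurable lborel"
      by measurable
    show "AE v in lborel. norm (G v * \<phi> (v * y)) \<le> norm \<bar>G v\<bar>"
      using \<phi>_bound by (intro AE_I2) (simp add: abs_mult mult_left_le)
  qed
  define h where "h = pi / y"
  have Fh: "integrable lborel (\<lambda>v. F (v + h))"
    using F by (rule lborel_integrable_shift)
  have shift: "(v + h) * y = v * y + pi" for v
    unfolding h_def using y by (simp add: field_simps)
  have "(LBINT v. F v * \<phi> (v * y)) = (LBINT v. F (v + h) * \<phi> ((v + h) * y))"
    using lborel_integral_shift[where F="\<lambda>v. F v * \<phi> (v * y)" and h=h] by simp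
  also have "\<dots> = - (LBINT v. F (v + h) * \<phi> (v * y))"
    unfolding shift \<phi>_anti by simp
  finally have "2 * (LBINT v. F v * \<phi> (v * y)) = (LBINT v. (F v - F (v + h)) * \<phi> (v * y))"
    using times_\<phi>[OF F] times_\<phi>[OF Fh] by (simp add: left_diff_distrib)
  also have "\<bar>\<dots>\<bar> \<le> (LBINT v. \<bar>F (v + h) - F v\<bar>)"
  proof (rule integral_abs_bound_integral)
    show "integrable lborel (\<lambda>v. (F v - F (v + h)) * \<phi> (v * y))"
      using F Fh by (intro times_\<phi> Bochner_Integration.integrable_diff)
    show "integrable lborel (\<lambda>v. \<bar>F (v + h) - F v\<bar>)"
      using F Fh by (intro integrable_abs Bochner_Integration.integrable_diff)
    show "\<bar>(F v - F (v + h)) * \<phi> (v * y)\<bar> \<le> \<bar>F (v + h) - F v\<bar>" for v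
      using \<phi>_bound[of "v * y"] by (simp add: abs_mult abs_minus_commute mult_left_le)
  qed
  finally show ?thesis unfolding h_def by simp
qed

definition L1_modulus :: "(real \<Rightarrow> real) \<Rightarrow> real \<Rightarrow> real" where
  "L1_modulus f h = (LBINT v. \<bar>indicator {0<..<1} (v + h) * f (v + h) - indicator {0<..<1} v * f v\<bar>)"

lemma integrable_zero_extension:
  fixes f :: "real \<Rightarrow> real"
  assumes "set_integrable lborel {0<..<1} f"
  shows "integrable lborel (\<lambda>v. \<bar>indicator {0<..<1} (v + h) * f (v + h) - indicator {0<..<1} v * f v\<bar>)"
    and "integrable lborel (\<lambda>v. \<bar>indicator {0<..<1} (v + h) * f (v + h)\<bar>)"
proof -
  have F: "integrable lborel (\<lambda>v. indicator {0<..<1} v * f v)"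
    using assms by (simp add: set_integrable_def)
  note Fh = lborel_integrable_shift[OF F, of h]
  show "integrable lborel (\<lambda>v. \<bar>indicator {0<..<1} (v + h) * f (v + h) - indicator {0<..<1} v * f v\<bar>)"
    using F Fh by (intro integrable_abs Bochner_Integration.integrable_diff)
  show "integrable lborel (\<lambda>v. \<bar>indicator {0<..<1} (v + h) * f (v + h)\<bar>)"
    using Fh by (rule integrable_abs)
qed

lemma L1_modulus_le_telescoping:
  fixes f g e :: "real \<Rightarrow> real" and h :: real
  assumes h: "0 < h" "h < 1"
    and g: "set_integrable lborel {0<..<1} g"
    and e: "set_integrable lborel {0<..<1-h} e"
    and f_le_g: "\<And>v. 0 < v \<Longrightarrow> v < 1 \<Longrightarrow> \<bar>f v\<bar> \<le> g v"
    and f_shift: "\<And>v. 0 < v \<Longrightarrow> v < 1 - h \<Longrightarrow> \<bar>f (v + h) - f v\<bar> \<le> g (v + h) - g v + e v"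
  shows "L1_modulus f h \<le> 2 * (LBINT v:{1-h<..<1}. g v) + (LBINT v:{0<..<1-h}. e v)"
proof -
  define G where "G v = indicator {0<..<1} v * g v" for v
  \<comment> \<open>The difference G (v + h) - G v has integral zero by translation invariance.\<close>
  define R where "R v = (G (v + h) - G v) + 2 * (indicator {1-h<..<1} v * g v)
    + indicator {0<..<1-h} v * e v" for v
  have G: "integrable lborel G"
    using g by (simp add: set_integrable_def G_def[abs_def])
  have "{1-h<..<1} \<subseteq> {0<..<1::real}"
    using h by auto
  then have g_tail: "integrable lborel (\<lambda>v. indicator {1-h<..<1} v * g v)"
    using set_integrable_subset[OF g, of "{1-h<..<1}"] by (simp add: set_integrable_def)
  have R: "integrable lborel R"
    unfolding R_def[abs_def] using G lborel_integrable_shift[OF G, of h] g_tail e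
    by (intro Bochner_Integration.integrable_add Bochner_Integration.integrable_diff integrable_mult_right)
       (auto simp: set_integrable_def)
  have pointwise: "\<bar>indicator {0<..<1} (v + h) * f (v + h) - indicator {0<..<1} v * f v\<bar> \<le> R v"
    if v_ne: "v \<noteq> 1 - h" for v
  proof -
    consider "v \<le> - h" | "- h < v" "v \<le> 0" | "0 < v" "v < 1 - h" | "1 - h < v" "v < 1" | "1 \<le> v"
      using v_ne by linarith
    then show ?thesis
    proof cases
      case 2
      then show ?thesis using h f_le_g[of "v + h"] by (simp add: R_def G_def indicator_def)
    next
      case 3
      then show ?thesis using h f_shift[of v] by (simp add: R_def G_def indicator_def)
    next
      case 4
      then show ?thesis using h f_le_g[of v] by (simp add: R_def G_def indicator_def)
    qed (use h in \<open>simp_all add: R_def G_def indicator_def\<close>)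
  qed
  have "L1_modulus f h \<le> (LBINT v. R v)"
    unfolding L1_modulus_def using R AE_lborel_singleton[of "1 - h"]
    by (intro integral_mono_AE') (auto elim!: eventually_mono intro: pointwise order_trans[OF _ pointwise])
  also have "(LBINT v. R v) = 2 * (LBINT v:{1-h<..<1}. g v) + (LBINT v:{0<..<1-h}. e v)"
    unfolding R_def[abs_def] lborel_integral_shift
    using G lborel_integrable_shift[OF G, of h] g_tail e
    by (simp add: lborel_integral_shift set_lebesgue_integral_def set_integrable_def)
  finally show ?thesis .
qed

lemma L1_modulus_times_id_le:
  fixes f :: "real \<Rightarrow> real"
  assumes f: "set_integrable lborel {0<..<1} f" and h: "0 < h" "h \<le> 1"
  shows "L1_modulus (\<lambda>v. v * f v) h \<le> L1_modulus f h + h * (LBINT v:{0<..<1}. \<bar>f v\<bar>)"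
proof -
  define F where "F v = indicator {0<..<1} v * f v" for v
  have pointwise: "\<bar>indicator {0<..<1} (v + h) * ((v + h) * f (v + h)) - indicator {0<..<1} v * (v * f v)\<bar>
      \<le> \<bar>F (v + h) - F v\<bar> + h * \<bar>F (v + h)\<bar>" for v
  proof (cases "\<bar>v\<bar> < 1")
    case True
    have "indicator {0<..<1} (v + h) * ((v + h) * f (v + h)) - indicator {0<..<1} v * (v * f v)
        = v * (F (v + h) - F v) + h * F (v + h)"
      by (simp add: F_def algebra_simps)
    also have "\<bar>\<dots>\<bar> \<le> \<bar>v\<bar> * \<bar>F (v + h) - F v\<bar> + h * \<bar>F (v + h)\<bar>"
      using h by (simp add: abs_mult abs_triangle_ineq[THEN order_trans])
    also have "\<dots> \<le> \<bar>F (v + h) - F v\<bar> + h * \<bar>F (v + h)\<bar>"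
      using True by (simp add: mult_left_le_one_le)
    finally show ?thesis .
  next
    case False
    then show ?thesis using h by (auto simp: F_def indicator_def)
  qed
  have "L1_modulus (\<lambda>v. v * f v) h \<le> (LBINT v. \<bar>F (v + h) - F v\<bar> + h * \<bar>F (v + h)\<bar>)"
    unfolding L1_modulus_def using integrable_zero_extension[OF f, of h] pointwise h
    by (intro integral_mono' Bochner_Integration.integrable_add integrable_mult_right) (simp_all add: F_def)
  also have "\<dots> = L1_modulus f h + h * (LBINT v:{0<..<1}. \<bar>f v\<bar>)"
    using integrable_zero_extension[OF f, of h]
    by (simp add: L1_modulus_def F_def lborel_integral_shift[where F="\<lambda>v. indicator {0<..<1} v * \<bar>f v\<bar>"]
        set_lebesgue_integral_def abs_mult)
  finally show ?thesis .
qed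

lemma abs_antiperiodic_transform_le_L1_modulus:
  fixes f \<phi> :: "real \<Rightarrow> real" and y :: real
  assumes "set_integrable lborel {0<..<1} f" "0 < y"
    and "\<phi> \<in> borel_measurable borel" "\<And>x. \<bar>\<phi> x\<bar> \<le> 1" "\<And>x. \<phi> (x + pi) = - \<phi> x"
  shows "\<bar>LBINT v:{0<..<1}. f v * \<phi> (v * y)\<bar> \<le> 1/2 * L1_modulus f (pi / y)"
proof -
  have "integrable lborel (\<lambda>v. indicator {0<..<1} v * f v)"
    using assms(1) by (simp add: set_integrable_def)
  from abs_integral_antiperiodic_le[OF this assms(2-5)] show ?thesis
    by (simp add: set_lebesgue_integral_def L1_modulus_def mult.assoc)
qed

lemma antiperiodic_transform_bigo_of_L1_modulus:
  fixes f \<phi> :: "real \<Rightarrow> real" and K :: real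
  assumes f: "set_integrable lborel {0<..<1} f"
    and \<phi>: "\<phi> \<in> borel_measurable borel" "\<And>x. \<bar>\<phi> x\<bar> \<le> 1" "\<And>x. \<phi> (x + pi) = - \<phi> x"
    and modulus: "\<And>h. 0 < h \<Longrightarrow> h \<le> 1/4 \<Longrightarrow> L1_modulus f h \<le> K * h * (1 - ln h)\<^sup>2"
  shows "(\<lambda>y. LBINT v:{0<..<1}. f v * \<phi> (v * y)) \<in> O[at_top](\<lambda>y. (ln y)\<^sup>2 / y)"
proof (rule bigoI)
  show "eventually (\<lambda>y. norm (LBINT v:{0<..<1}. f v * \<phi> (v * y)) \<le> pi / 2 * \<bar>K\<bar> * norm ((ln y)\<^sup>2 / y)) at_top"
    using eventually_ge_at_top[of "4 * pi"]
  proof eventually_elim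
    case (elim y)
    have "pi \<le> y" and y: "0 < y"
      using elim pi_gt_zero by linarith+
    then have h: "0 < pi / y" "pi / y \<le> 1/4"
      using elim by (auto simp: field_simps)
    have "\<bar>LBINT v:{0<..<1}. f v * \<phi> (v * y)\<bar> \<le> 1/2 * L1_modulus f (pi / y)"
      by (rule abs_antiperiodic_transform_le_L1_modulus[OF f y \<phi>])
    also have "\<dots> \<le> 1/2 * (\<bar>K\<bar> * (pi / y * (ln y)\<^sup>2))"
    proof -
      have "K * (pi / y * (1 - ln (pi / y))\<^sup>2) \<le> \<bar>K\<bar> * (pi / y * (1 - ln (pi / y))\<^sup>2)"
        using h by (intro mult_right_mono mult_nonneg_nonneg) auto
      also have "\<dots> \<le> \<bar>K\<bar> * (pi / y * (ln y)\<^sup>2)"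
        using h one_minus_ln_pi_div_le[OF \<open>pi \<le> y\<close>] by (intro mult_left_mono) simp_all
      finally show ?thesis
        using modulus[OF h] by (simp add: mult.assoc)
    qed
    also have "\<dots> = pi / 2 * \<bar>K\<bar> * norm ((ln y)\<^sup>2 / y)"
      using y by simp
    finally show ?case
      by simp
  qed
qed

section \<open>The kernel integrals\<close>

lemma Lf_pos: "1 < u \<Longrightarrow> 0 < Lf u"
  unfolding Lf_def by (simp add: field_simps)

lemma Lf_le_ln: "1 < u \<Longrightarrow> u \<le> 2 \<Longrightarrow> Lf u \<le> ln (3 / (u - 1))"
  unfolding Lf_def by (subst ln_le_cancel_iff) (auto intro!: divide_right_mono)

lemma Lf_le_two: "2 \<le> u \<Longrightarrow> Lf u \<le> 2"
proof -
  assume "2 \<le> u"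
  then have "Lf u \<le> ln 3"
    unfolding Lf_def by (subst ln_le_cancel_iff) (auto simp: field_simps)
  then show ?thesis
    using ln_three_le_two by linarith
qed

lemma Lf_measurable [measurable]: "Lf \<in> borel_measurable borel"
  unfolding Lf_def by measurable

lemma ln_measurable: "(ln :: real \<Rightarrow> real) \<in> borel_measurable borel"
  by measurable

definition Kint :: "(real \<Rightarrow> real) \<Rightarrow> real \<Rightarrow> real \<Rightarrow> real" where
  "Kint w v u = Lf u * w u / (u\<^sup>2 - v\<^sup>2)\<^sup>2"

definition Kf :: "(real \<Rightarrow> real) \<Rightarrow> real \<Rightarrow> real" where
  "Kf w v = (LBINT u:{1<..}. Kint w v u)"

abbreviation Af :: "real \<Rightarrow> real" where
  "Af \<equiv> Kf (\<lambda>_. 1)"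

abbreviation Bf :: "real \<Rightarrow> real" where
  "Bf \<equiv> Kf ln"

lemma Kint_measurable [measurable]:
  assumes [measurable]: "w \<in> borel_measurable borel"
  shows "Kint w v \<in> borel_measurable borel"
  unfolding Kint_def by measurable

lemma Kf_measurable [measurable]:
  assumes [measurable]: "w \<in> borel_measurable borel"
  shows "Kf w \<in> borel_measurable borel"
  unfolding Kf_def[abs_def] Kint_def set_lebesgue_integral_def by measurable

lemma Kint_nonneg: "1 < u \<Longrightarrow> 0 \<le> w u \<Longrightarrow> 0 \<le> Kint w v u"
  unfolding Kint_def using Lf_pos[of u] by simp

lemma Kf_nonneg:
  assumes "\<And>u. 1 < u \<Longrightarrow> 0 \<le> w u"
  shows "0 \<le> Kf w v"
  unfolding Kf_def set_lebesgue_integral_def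
  using assms by (intro integral_nonneg_AE AE_I2) (auto simp: indicator_def Kint_nonneg)

lemma denominator_mono:
  fixes u v v' :: real
  assumes "0 \<le> v" "v \<le> v'" "v' < 1" "1 < u"
  shows "0 < (u\<^sup>2 - v'\<^sup>2)\<^sup>2" "(u\<^sup>2 - v'\<^sup>2)\<^sup>2 \<le> (u\<^sup>2 - v\<^sup>2)\<^sup>2"
proof -
  have "v'\<^sup>2 < 1" "1 < u\<^sup>2" "v\<^sup>2 \<le> v'\<^sup>2"
    using assms by (auto simp: power_less_one_iff one_less_power intro: power_mono)
  then show "0 < (u\<^sup>2 - v'\<^sup>2)\<^sup>2" "(u\<^sup>2 - v'\<^sup>2)\<^sup>2 \<le> (u\<^sup>2 - v\<^sup>2)\<^sup>2"
    by (auto intro!: power_mono)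
qed

lemma Kint_mono:
  assumes "0 \<le> v" "v \<le> v'" "v' < 1" "1 < u" "0 \<le> w u"
  shows "Kint w v u \<le> Kint w v' u"
  unfolding Kint_def using denominator_mono[OF assms(1-4)] Lf_pos[of u] assms
  by (intro divide_left_mono) auto

lemma Kf_mono:
  assumes "w \<in> borel_measurable borel" "\<And>u. 1 < u \<Longrightarrow> 0 \<le> w u"
    and "set_integrable lborel {1<..} (Kint w v')" "0 \<le> v" "v \<le> v'" "v' < 1"
  shows "set_integrable lborel {1<..} (Kint w v)" "Kf w v \<le> Kf w v'"
  using set_integral_le_majorant[OF assms(3), of "Kint w v"] assms
  by (auto simp: Kf_def Kint_nonneg Kint_mono)

lemma denominator_ge_near_zero:
  fixes u v :: real
  assumes "1 < u" "0 \<le> v" "v \<le> 1/2"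
  shows "u ^ 4 \<le> (1 + 4 * v\<^sup>2) * (u\<^sup>2 - v\<^sup>2)\<^sup>2"
proof -
  define a b where "a = u\<^sup>2" and "b = v\<^sup>2"
  have "1 \<le> a"
    unfolding a_def using assms by (simp add: one_le_power)
  moreover have "0 \<le> b" "b \<le> 1/4"
    unfolding b_def using assms power_mono[of v "1/2" 2] by (auto simp: power2_eq_square)
  ultimately have "0 \<le> 2 * a * b * (2 * a - 1 - 4 * b) + b\<^sup>2 * (1 + 4 * b)"
    by (intro add_nonneg_nonneg mult_nonneg_nonneg) auto
  also have "\<dots> = (1 + 4 * b) * (a - b)\<^sup>2 - a\<^sup>2"
    by (simp add: power2_eq_square algebra_simps)
  finally show ?thesis
    unfolding a_def b_def by (simp add: power2_eq_square power4_eq_xxxx)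
qed

lemma Kint_le_near_zero:
  assumes "1 < u" "0 \<le> v" "v \<le> 1/2" "0 \<le> w u"
  shows "Kint w v u \<le> (1 + 4 * v\<^sup>2) * Kint w 0 u"
proof -
  have "0 < (u\<^sup>2 - v\<^sup>2)\<^sup>2"
    using denominator_mono[of 0 v u] assms by auto
  then have "1 / (u\<^sup>2 - v\<^sup>2)\<^sup>2 \<le> (1 + 4 * v\<^sup>2) / u ^ 4"
    using denominator_ge_near_zero[OF assms(1-3)] assms by (simp add: field_simps)
  then have "Lf u * w u * (1 / (u\<^sup>2 - v\<^sup>2)\<^sup>2) \<le> Lf u * w u * ((1 + 4 * v\<^sup>2) / u ^ 4)"
    using Lf_pos[of u] assms by (intro mult_left_mono) auto
  then show ?thesis
    unfolding Kint_def by (simp add: power2_eq_square power4_eq_xxxx ac_simps)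
qed

lemma Kf_near_zero:
  assumes "w \<in> borel_measurable borel" "\<And>u. 1 < u \<Longrightarrow> 0 \<le> w u"
    and "set_integrable lborel {1<..} (Kint w (1/2))" "0 \<le> v" "v \<le> 1/2"
  shows "\<bar>Kf w v - Kf w 0\<bar> \<le> 4 * v\<^sup>2 * Kf w 0"
proof -
  note integrable = Kf_mono(1)[OF assms(1-3)]
  have "Kf w 0 \<le> Kf w v"
    using Kf_mono(2)[OF assms(1,2) integrable[of v]] assms by auto
  moreover have "Kf w v \<le> (LBINT u:{1<..}. (1 + 4 * v\<^sup>2) * Kint w 0 u)"
    unfolding Kf_def using integrable[of v] integrable[of 0] assms
    by (intro set_integral_mono Kint_le_near_zero) auto
  moreover have "(LBINT u:{1<..}. (1 + 4 * v\<^sup>2) * Kint w 0 u) = (1 + 4 * v\<^sup>2) * Kf w 0"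
    unfolding Kf_def by (rule set_integral_mult_right)
  ultimately show ?thesis
    by (simp add: algebra_simps)
qed

lemma denominator_ge_tail:
  fixes u v :: real
  assumes "2 \<le> u" "0 \<le> v" "v < 1"
  shows "9/16 * u ^ 4 \<le> (u\<^sup>2 - v\<^sup>2)\<^sup>2"
proof -
  have "v\<^sup>2 \<le> 1"
    using assms by (simp add: power_le_one)
  moreover have "4 \<le> u\<^sup>2"
    using power_mono[of 2 u 2] assms by simp
  ultimately have "3/4 * u\<^sup>2 \<le> u\<^sup>2 - v\<^sup>2"
    by simp
  then have "(3/4 * u\<^sup>2)\<^sup>2 \<le> (u\<^sup>2 - v\<^sup>2)\<^sup>2"
    by (rule power_mono) simp
  then show ?thesis
    by (simp add: power2_eq_square power4_eq_xxxx)
qed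

lemma Kint_le_tail:
  assumes "2 \<le> u" "0 \<le> v" "v < 1" "0 \<le> w u" "w u \<le> u"
  shows "Kint w v u \<le> 4 / u ^ 3"
proof -
  have "Lf u * w u \<le> 2 * u"
    using Lf_le_two[of u] Lf_pos[of u] assms by (intro mult_mono) auto
  then have "Kint w v u \<le> 2 * u / (9/16 * u ^ 4)"
    unfolding Kint_def using denominator_ge_tail[OF assms(1-3)] Lf_pos[of u] assms
    by (intro frac_le) auto
  also have "\<dots> \<le> 4 / u ^ 3"
    using assms by (simp add: field_simps power_numeral_reduce)
  finally show ?thesis .
qed

lemma square_diff_le_denominator:
  fixes u v :: real
  assumes "v < u" "1 \<le> u + v"
  shows "(u - v)\<^sup>2 \<le> (u\<^sup>2 - v\<^sup>2)\<^sup>2"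
proof -
  have "u - v \<le> (u - v) * (u + v)"
    using assms by (simp add: mult_le_cancel_left1)
  also have "\<dots> = u\<^sup>2 - v\<^sup>2"
    by (simp add: power2_eq_square algebra_simps)
  finally show ?thesis
    using assms by (intro power_mono) auto
qed

lemma Kint_one_le_near_one:
  assumes "1/2 \<le> v" "v < 1"
  shows "1 < u \<Longrightarrow> u < 2 - v \<Longrightarrow> Kint (\<lambda>_. 1) v u \<le> ln (3 / (u - 1)) / (1 - v)\<^sup>2"
    and "2 - v < u \<Longrightarrow> u < 2 \<Longrightarrow> Kint (\<lambda>_. 1) v u \<le> ln (3 / (1 - v)) / (u - v)\<^sup>2"
proof -
  assume u: "1 < u" "u < 2 - v"
  have "(1 - v)\<^sup>2 \<le> (u - v)\<^sup>2"
    using u assms by (intro power_mono) auto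
  also have "\<dots> \<le> (u\<^sup>2 - v\<^sup>2)\<^sup>2"
    using u assms by (intro square_diff_le_denominator) auto
  finally show "Kint (\<lambda>_. 1) v u \<le> ln (3 / (u - 1)) / (1 - v)\<^sup>2"
    using Lf_pos[of u] Lf_le_ln[of u] u assms by (auto simp: Kint_def intro!: frac_le)
next
  assume u: "2 - v < u" "u < 2"
  have "Lf u \<le> ln (3 / (u - 1))"
    using u assms by (intro Lf_le_ln) auto
  also have "\<dots> \<le> ln (3 / (1 - v))"
    using u assms by (subst ln_le_cancel_iff) (auto intro!: divide_left_mono)
  finally show "Kint (\<lambda>_. 1) v u \<le> ln (3 / (1 - v)) / (u - v)\<^sup>2"
    using Lf_pos[of u] square_diff_le_denominator[of v u] u assms
    by (auto simp: Kint_def intro!: frac_le)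
qed

lemma Af_tail_near_one:
  assumes "1/2 \<le> v" "v < 1"
  shows "set_integrable lborel {2-v<..} (Kint (\<lambda>_. 1) v)"
    and "(LBINT u:{2-v<..}. Kint (\<lambda>_. 1) v u) \<le> ln (3 / (1 - v)) / (2 * (1 - v)) + 1/2"
proof -
  have middle: "0 \<le> Kint (\<lambda>_. 1) v u \<and> Kint (\<lambda>_. 1) v u \<le> ln (3 / (1 - v)) / (u - v)\<^sup>2"
    if "2 - v < u" "u < 2" for u
    using Kint_one_le_near_one(2)[OF assms that] Kint_nonneg[of u "\<lambda>_. 1" v] that assms by simp
  have tail: "0 \<le> Kint (\<lambda>_. 1) v u \<and> Kint (\<lambda>_. 1) v u \<le> 4 / u ^ 3" if "2 < u" for u
    using Kint_le_tail[of u v "\<lambda>_. 1"] Kint_nonneg[of u "\<lambda>_. 1" v] that assms by auto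
  have "2 - v < 2" "Kint (\<lambda>_. 1) v \<in> borel_measurable borel"
    using assms by auto
  moreover have "set_integrable lborel {2-v<..<2} (\<lambda>u. ln (3 / (1 - v)) / (u - v)\<^sup>2)"
    using integral_inverse_square(1)[of v "2 - v" 2 "ln (3 / (1 - v))"] assms by simp
  moreover have "set_integrable lborel {2<..} (\<lambda>u::real. 4 / u ^ 3)"
    using integral_inverse_cube_Ioi(1)[of 2 4] by simp
  ultimately have split: "set_integrable lborel {2-v<..} (Kint (\<lambda>_. 1) v)"
    "(LBINT u:{2-v<..}. Kint (\<lambda>_. 1) v u) \<le> (LBINT u:{2-v<..<2}. ln (3 / (1 - v)) / (u - v)\<^sup>2)
      + (LBINT u:{2<..}. 4 / u ^ 3)"
    using set_integral_Ioi_le_split[of "2 - v" 2 _ _ "\<lambda>u. 4 / u ^ 3", OF _ _ _ _ middle tail] by auto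
  show "set_integrable lborel {2-v<..} (Kint (\<lambda>_. 1) v)"
    by (rule split(1))
  have "(LBINT u:{2-v<..<2}. ln (3 / (1 - v)) / (u - v)\<^sup>2)
      = ln (3 / (1 - v)) / (2 * (1 - v)) - ln (3 / (1 - v)) / (2 - v)"
    using integral_inverse_square(2)[of v "2 - v" 2 "ln (3 / (1 - v))"] assms by (simp add: algebra_simps)
  also have "\<dots> \<le> ln (3 / (1 - v)) / (2 * (1 - v))"
    using assms by simp
  finally show "(LBINT u:{2-v<..}. Kint (\<lambda>_. 1) v u) \<le> ln (3 / (1 - v)) / (2 * (1 - v)) + 1/2"
    using split(2) integral_inverse_cube_Ioi(2)[of 2 4] by simp
qed

lemma Af_near_one:
  assumes "1/2 \<le> v" "v < 1"
  shows "set_integrable lborel {1<..} (Kint (\<lambda>_. 1) v)"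
    and "Af v \<le> 5 * (1 - ln (1 - v)) / (1 - v)"
proof -
  note tail = Af_tail_near_one[OF assms]
  have near: "0 \<le> Kint (\<lambda>_. 1) v u \<and> Kint (\<lambda>_. 1) v u \<le> ln (3 / (u - 1)) / (1 - v)\<^sup>2"
    if "1 < u" "u < 2 - v" for u
    using Kint_one_le_near_one(1)[OF assms that] Kint_nonneg[of u "\<lambda>_. 1" v] that by simp
  have above: "0 \<le> Kint (\<lambda>_. 1) v u \<and> Kint (\<lambda>_. 1) v u \<le> Kint (\<lambda>_. 1) v u" if "2 - v < u" for u
    using Kint_nonneg[of u "\<lambda>_. 1" v] that assms by auto
  have "1 + (1 - v) = 2 - v"
    by simp
  note singularity = integral_ln_singularity[of "1 - v" 3 1, unfolded this]
  have "1 < 2 - v" "Kint (\<lambda>_. 1) v \<in> borel_measurable borel"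
    using assms by auto
  moreover have "set_integrable lborel {1<..<2-v} (\<lambda>u. ln (3 / (u - 1)) / (1 - v)\<^sup>2)"
    using singularity(1) assms by simp
  ultimately have split: "set_integrable lborel {1<..} (Kint (\<lambda>_. 1) v)"
    "Af v \<le> (LBINT u:{1<..<2-v}. ln (3 / (u - 1)) / (1 - v)\<^sup>2) + (LBINT u:{2-v<..}. Kint (\<lambda>_. 1) v u)"
    using set_integral_Ioi_le_split[OF _ _ _ tail(1) near above] unfolding Kf_def by auto
  show "set_integrable lborel {1<..} (Kint (\<lambda>_. 1) v)"
    by (rule split(1))
  have "Af v \<le> (1 - v) * (1 + ln (3 / (1 - v))) / (1 - v)\<^sup>2 + (ln (3 / (1 - v)) / (2 * (1 - v)) + 1/2)"
    using split(2) tail(2) singularity(2) assms by simp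
  also have "\<dots> = (2 + 3 * ln (3 / (1 - v)) + (1 - v)) / (2 * (1 - v))"
  proof -
    have arith: "a * (1 + l) / a\<^sup>2 + (l / (2 * a) + 1/2) = (2 + 3 * l + a) / (2 * a)"
      if "0 < a" for a l :: real
      using that by (simp add: field_simps power2_eq_square)
    show ?thesis
      by (rule arith) (use assms in simp)
  qed
  also have "\<dots> \<le> (10 - 10 * ln (1 - v)) / (2 * (1 - v))"
  proof (rule divide_right_mono)
    have "ln (3 / (1 - v)) = ln 3 - ln (1 - v)" "ln (1 - v) \<le> 0"
      using assms by (auto simp: ln_div)
    then show "2 + 3 * ln (3 / (1 - v)) + (1 - v) \<le> 10 - 10 * ln (1 - v)"
      using ln_three_le_two assms by linarith
  qed (use assms in simp)
  also have "\<dots> = 5 * (1 - ln (1 - v)) / (1 - v)"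
    using assms by (simp add: field_simps)
  finally show "Af v \<le> 5 * (1 - ln (1 - v)) / (1 - v)" .
qed

lemma Kint_ln_le_near_one:
  assumes "0 \<le> v" "v < 1" "1 < u" "u < 2"
  shows "Kint ln v u \<le> (ln 3 + 1 - ln (u - v)) / (u - v)"
proof -
  have "ln (u - 1) \<le> ln 3"
    using assms by simp
  then have "Lf u * ln u \<le> (ln 3 - ln (u - 1)) * (u - 1)"
    using Lf_pos[of u] Lf_le_ln[of u] ln_le_minus_one[of u] assms
    by (intro mult_mono) (auto simp: ln_div)
  then have "Kint ln v u \<le> (ln 3 - ln (u - 1)) * (u - 1) / (u - v)\<^sup>2"
    unfolding Kint_def using square_diff_le_denominator[of v u] \<open>ln (u - 1) \<le> ln 3\<close> assms
    by (intro frac_le) auto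
  also have "\<dots> = ((ln 3 - ln (u - 1)) * (u - 1) / (u - v)) / (u - v)"
    by (simp add: power2_eq_square)
  also have "\<dots> \<le> (ln 3 + 1 - ln (u - v)) / (u - v)"
    using ln_weighted_ratio_le[of "u - 1" "u - v" 3] assms by (intro divide_right_mono) auto
  finally show ?thesis .
qed

lemma Bf_near_one:
  assumes "1/2 \<le> v" "v < 1"
  shows "set_integrable lborel {1<..} (Kint ln v)"
    and "Bf v \<le> 5 * (1 - ln (1 - v))\<^sup>2"
proof -
  define c :: real where "c = ln 3 + 1"
  have near: "0 \<le> Kint ln v u \<and> Kint ln v u \<le> (c - ln (u - v)) / (u - v)" if "1 < u" "u < 2" for u
    using Kint_ln_le_near_one[of v u] Kint_nonneg[of u ln v] that assms unfolding c_def by simp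
  have tail: "0 \<le> Kint ln v u \<and> Kint ln v u \<le> 4 / u ^ 3" if "2 < u" for u
    using Kint_le_tail[of u v ln] Kint_nonneg[of u ln v] ln_le_minus_one[of u] that assms by auto
  have "0 \<le> ln (3::real)"
    by simp
  then have "ln (2 - v) \<le> c"
    using ln_le_minus_one[of "2 - v"] assms unfolding c_def by linarith
  note log_integral = integral_ln_over_linear[of v 1 2 c, OF _ _ this]
  have "(1::real) < 2" "Kint ln v \<in> borel_measurable borel"
    by auto
  moreover have "set_integrable lborel {2<..} (\<lambda>u::real. 4 / u ^ 3)"
    using integral_inverse_cube_Ioi(1)[of 2 4] by simp
  ultimately have split: "set_integrable lborel {1<..} (Kint ln v)"
    "Bf v \<le> (LBINT u:{1<..<2}. (c - ln (u - v)) / (u - v)) + (LBINT u:{2<..}. 4 / u ^ 3)"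
    using set_integral_Ioi_le_split[OF _ _ log_integral(1) _ near tail] assms unfolding Kf_def by auto
  show "set_integrable lborel {1<..} (Kint ln v)"
    by (rule split(1))
  have "Bf v \<le> ((c - ln (1 - v))\<^sup>2 - (c - ln (2 - v))\<^sup>2) / 2 + 1/2"
    using split(2) log_integral(2) integral_inverse_cube_Ioi(2)[of 2 4] assms by simp
  also have "\<dots> \<le> (c - ln (1 - v))\<^sup>2 / 2 + 1/2"
    by (simp add: diff_divide_distrib)
  also have "\<dots> \<le> (3 - ln (1 - v))\<^sup>2 / 2 + 1/2"
  proof -
    have "ln (1 - v) \<le> 0" "0 \<le> ln (3::real)"
      using assms by auto
    then have "0 \<le> c - ln (1 - v)" "c \<le> 3"
      using ln_three_le_two unfolding c_def by linarith+
    then show ?thesis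
      by (simp add: power_mono)
  qed
  also have "\<dots> \<le> 5 * (1 - ln (1 - v))\<^sup>2"
  proof -
    have "(3 + L)\<^sup>2 / 2 + 1/2 \<le> 5 * (1 + L)\<^sup>2" if "0 \<le> L" for L :: real
      using that mult_nonneg_nonneg[OF that that] by (simp add: power2_eq_square field_simps)
    from this[of "- ln (1 - v)"] show ?thesis
      using assms by simp
  qed
  finally show "Bf v \<le> 5 * (1 - ln (1 - v))\<^sup>2" .
qed

lemma Af_Bf_integrable:
  assumes "0 \<le> v" "v < 1"
  shows "set_integrable lborel {1<..} (Kint (\<lambda>_. 1) v)"
    and "set_integrable lborel {1<..} (Kint ln v)"
proof -
  show "set_integrable lborel {1<..} (Kint (\<lambda>_. 1) v)"
    using Af_near_one(1)[of v] Kf_mono(1)[OF _ _ Af_near_one(1)[of "1/2"], of v] assms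
    by (cases "1/2 \<le> v") auto
  show "set_integrable lborel {1<..} (Kint ln v)"
    using Bf_near_one(1)[of v] Kf_mono(1)[OF ln_measurable _ Bf_near_one(1)[of "1/2"], of v] assms
    by (cases "1/2 \<le> v") auto
qed

lemma Af_mono: "0 \<le> v \<Longrightarrow> v \<le> v' \<Longrightarrow> v' < 1 \<Longrightarrow> Af v \<le> Af v'"
  using Kf_mono(2)[OF _ _ Af_Bf_integrable(1)] by auto

lemma Bf_mono: "0 \<le> v \<Longrightarrow> v \<le> v' \<Longrightarrow> v' < 1 \<Longrightarrow> Bf v \<le> Bf v'"
  using Kf_mono(2)[OF ln_measurable _ Af_Bf_integrable(2)] by auto

lemma Af_nonneg: "0 \<le> Af v" and Bf_nonneg: "0 \<le> Bf v"
  by (auto intro: Kf_nonneg)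

section \<open>The function C\<close>

lemma Cint_eq:
  assumes "0 < v" "1 < u"
  shows "Cint v u = ln (1 / v) * Kint (\<lambda>_. 1) v u - Kint ln v u"
proof -
  have "ellf u v = ln (1 / v) - ln u"
    unfolding ellf_def using assms by (simp add: ln_div ln_mult)
  then show ?thesis
    unfolding Cint_def Kint_def by (simp add: right_diff_distrib diff_divide_distrib)
qed

lemma Cf_eq:
  assumes "0 < v" "v < 1"
  shows "set_integrable lborel {1<..} (Cint v)" "Cf v = ln (1 / v) * Af v - Bf v"
proof -
  have integrable: "set_integrable lborel {1<..} (\<lambda>u. ln (1 / v) * Kint (\<lambda>_. 1) v u - Kint ln v u)"
    using Af_Bf_integrable[of v] assms by auto
  show "set_integrable lborel {1<..} (Cint v)"
    by (rule set_integrable_cong[THEN iffD1, OF refl refl _ integrable]) (use assms Cint_eq in auto)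
  have "Cf v = (LBINT u:{1<..}. ln (1 / v) * Kint (\<lambda>_. 1) v u - Kint ln v u)"
    unfolding Cf_def by (rule set_lebesgue_integral_cong) (use assms Cint_eq in auto)
  also have "\<dots> = ln (1 / v) * Af v - Bf v"
    using Af_Bf_integrable[of v] assms unfolding Kf_def by (subst set_integral_diff) auto
  finally show "Cf v = ln (1 / v) * Af v - Bf v" .
qed

lemma c0_eq: "c0 = Af 0" and d0_eq: "d0 = - Bf 0"
proof -
  show "c0 = Af 0"
    unfolding c0_def Kf_def Kint_def
    by (rule set_lebesgue_integral_cong) (auto simp: power2_eq_square power4_eq_xxxx)
  have "d0 = (LBINT u:{1<..}. - Kint ln 0 u)"
    unfolding d0_def Kint_def
    by (rule set_lebesgue_integral_cong) (auto simp: power2_eq_square power4_eq_xxxx ln_div)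
  then show "d0 = - Bf 0"
    unfolding Kf_def using Af_Bf_integrable(2)[of 0] by (simp add: set_integral_uminus)
qed

lemma c0_d0_integrable:
  shows "set_integrable lborel {1<..} (\<lambda>u. Lf u / u ^ 4)"
    and "set_integrable lborel {1<..} (\<lambda>u. Lf u * ln (1 / u) / u ^ 4)"
proof -
  show "set_integrable lborel {1<..} (\<lambda>u. Lf u / u ^ 4)"
    by (rule set_integrable_cong[THEN iffD1, OF refl refl _ Af_Bf_integrable(1)[of 0]])
       (auto simp: Kint_def power2_eq_square power4_eq_xxxx)
  have "set_integrable lborel {1<..} (\<lambda>u. - Kint ln 0 u)"
    using Af_Bf_integrable(2)[of 0] by (simp add: set_integrable_def)
  then show "set_integrable lborel {1<..} (\<lambda>u. Lf u * ln (1 / u) / u ^ 4)"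
    by (rule set_integrable_cong[THEN iffD1, OF refl refl, rotated])
       (auto simp: Kint_def power2_eq_square power4_eq_xxxx ln_div)
qed

lemma Cf_expansion_at_zero:
  "(\<lambda>v. Cf v - c0 * ln (1 / v) - d0) \<in> O[at_right 0](\<lambda>v. v\<^sup>2 * ln (1 / v))"
proof (rule bigoI)
  have Af_near_zero: "\<bar>Af v - Af 0\<bar> \<le> 4 * v\<^sup>2 * Af 0" if "0 \<le> v" "v \<le> 1/2" for v
    using Kf_near_zero[OF _ _ Af_Bf_integrable(1)[of "1/2"]] that by auto
  have Bf_near_zero: "\<bar>Bf v - Bf 0\<bar> \<le> 4 * v\<^sup>2 * Bf 0" if "0 \<le> v" "v \<le> 1/2" for v
    using Kf_near_zero[OF ln_measurable _ Af_Bf_integrable(2)[of "1/2"]] that by auto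
  have "eventually (\<lambda>v::real. 0 < v \<and> v < 1/2) (at_right 0)"
    using eventually_at_right_real[of 0 "1/2::real"] by simp
  then show "eventually (\<lambda>v. norm (Cf v - c0 * ln (1 / v) - d0)
      \<le> 4 * (Af 0 + Bf 0 / ln 2) * norm (v\<^sup>2 * ln (1 / v))) (at_right 0)"
  proof eventually_elim
    case (elim v)
    have ln2: "ln 2 \<le> ln (1 / v)"
      using elim by (subst ln_le_cancel_iff) (auto simp: field_simps)
    then have ln_nonneg: "0 \<le> ln (1 / v)"
      using ln_ge_zero[of 2] by linarith
    have "\<bar>Cf v - c0 * ln (1 / v) - d0\<bar> = \<bar>ln (1 / v) * (Af v - Af 0) - (Bf v - Bf 0)\<bar>"
      using Cf_eq(2)[of v] elim c0_eq d0_eq by (simp add: algebra_simps)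
    also have "\<dots> \<le> ln (1 / v) * \<bar>Af v - Af 0\<bar> + \<bar>Bf v - Bf 0\<bar>"
      using ln_nonneg by (simp add: abs_mult abs_triangle_ineq4[THEN order_trans])
    also have "\<dots> \<le> ln (1 / v) * (4 * v\<^sup>2 * Af 0) + 4 * v\<^sup>2 * (Bf 0 / ln 2 * ln (1 / v))"
    proof (intro add_mono mult_left_mono)
      have "Bf 0 = Bf 0 / ln 2 * ln 2"
        by simp
      also have "\<dots> \<le> Bf 0 / ln 2 * ln (1 / v)"
        using ln2 Bf_nonneg[of 0] by (intro mult_left_mono) auto
      finally have "4 * v\<^sup>2 * Bf 0 \<le> 4 * v\<^sup>2 * (Bf 0 / ln 2 * ln (1 / v))"
        by (intro mult_left_mono) auto
      then show "\<bar>Bf v - Bf 0\<bar> \<le> 4 * v\<^sup>2 * (Bf 0 / ln 2 * ln (1 / v))"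
        using Bf_near_zero[of v] elim by linarith
    qed (use Af_near_zero[of v] elim ln_nonneg in auto)
    also have "\<dots> = 4 * (Af 0 + Bf 0 / ln 2) * norm (v\<^sup>2 * ln (1 / v))"
      using ln_nonneg by (simp add: abs_mult algebra_simps)
    finally show ?case
      by simp
  qed
qed

definition Cmajorant :: "real \<Rightarrow> real" where
  "Cmajorant v = ln (1 / v) * Af v + Bf v"

lemma Cmajorant_measurable [measurable]: "Cmajorant \<in> borel_measurable borel"
  unfolding Cmajorant_def[abs_def] using ln_measurable by measurable

lemma Cf_measurable [measurable]: "Cf \<in> borel_measurable borel"
  unfolding Cf_def[abs_def] set_lebesgue_integral_def Cint_def ellf_def by measurable

lemma abs_Cf_le_Cmajorant:
  assumes "0 < v" "v < 1"
  shows "\<bar>Cf v\<bar> \<le> Cmajorant v"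
proof -
  have "0 \<le> ln (1 / v) * Af v"
    using assms Af_nonneg[of v] by simp
  then show ?thesis
    using Cf_eq(2)[OF assms] Bf_nonneg[of v] unfolding Cmajorant_def by simp
qed

lemma Cmajorant_near_zero:
  assumes "0 < v" "v < 1/2"
  shows "Cmajorant v \<le> (Af (1/2) + Bf (1/2) / ln 2) * ln (1 / v)"
proof -
  have ln2: "ln 2 \<le> ln (1 / v)"
    using assms by (subst ln_le_cancel_iff) (auto simp: field_simps)
  have "ln (1 / v) * Af v \<le> ln (1 / v) * Af (1/2)"
    using Af_mono[of v "1/2"] ln2 ln_ge_zero[of 2] assms by (intro mult_left_mono) auto
  moreover have "Bf v \<le> Bf (1/2) / ln 2 * ln (1 / v)"
  proof -
    have "Bf v \<le> Bf (1/2) / ln 2 * ln 2"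
      using Bf_mono[of v "1/2"] assms by simp
    also have "\<dots> \<le> Bf (1/2) / ln 2 * ln (1 / v)"
      using ln2 Bf_nonneg[of "1/2"] by (intro mult_left_mono) auto
    finally show ?thesis .
  qed
  ultimately show ?thesis
    unfolding Cmajorant_def by (simp add: algebra_simps)
qed

lemma Cmajorant_near_one:
  assumes "1/2 \<le> v" "v < 1"
  shows "Cmajorant v \<le> 15 * (1 - ln (1 - v))\<^sup>2"
proof -
  have "ln (1 / v) \<le> 1 / v - 1"
    using assms by (intro ln_le_minus_one) auto
  also have "\<dots> = (1 - v) / v"
    using assms by (simp add: field_simps)
  also have "\<dots> \<le> (1 - v) / (1/2)"
    using assms by (intro divide_left_mono) auto
  finally have "ln (1 / v) * Af v \<le> (1 - v) / (1/2) * (5 * (1 - ln (1 - v)) / (1 - v))"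
    using Af_near_one(2)[OF assms] Af_nonneg[of v] assms by (intro mult_mono) auto
  also have "\<dots> = 10 * (1 - ln (1 - v))"
    using assms by (simp add: field_simps)
  also have "\<dots> \<le> 10 * (1 - ln (1 - v))\<^sup>2"
    using self_le_power[of "1 - ln (1 - v)" 2] assms by simp
  finally show ?thesis
    using Bf_near_one(2)[OF assms] unfolding Cmajorant_def by simp
qed

lemma Cmajorant_integrable: "set_integrable lborel {0<..<1} Cmajorant"
proof -
  have "set_integrable lborel {0<..<1/2} (\<lambda>v. (Af (1/2) + Bf (1/2) / ln 2) * ln (1 / v))"
    using integral_ln_singularity(1)[of "1/2" 1 0] by simp
  moreover have "set_integrable lborel {1/2<..<1} (\<lambda>v::real. 15 * (1 - ln (1 - v))\<^sup>2)"
    using integral_ln_square_near_one(1)[of "1/2"] by simp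
  moreover have "0 \<le> Cmajorant v" if "0 < v" "v < 1" for v
    using abs_Cf_le_Cmajorant[OF that] by simp
  ultimately show ?thesis
    using Cmajorant_near_zero Cmajorant_near_one
    by (intro set_integral_Ioo_le_split(1)[of 0 "1/2" 1 Cmajorant
        "\<lambda>v. (Af (1/2) + Bf (1/2) / ln 2) * ln (1 / v)" "\<lambda>v. 15 * (1 - ln (1 - v))\<^sup>2"]) auto
qed

lemma integral_Cmajorant_near_one:
  assumes "0 < h" "h \<le> 1/2"
  shows "(LBINT v:{1-h<..<1}. Cmajorant v) \<le> 75 * h * (1 - ln h)\<^sup>2"
proof -
  note log_square = integral_ln_square_near_one[of h]
  have "(LBINT v:{1-h<..<1}. Cmajorant v) \<le> (LBINT v:{1-h<..<1}. 15 * (1 - ln (1 - v))\<^sup>2)"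
    using assms log_square Cmajorant_near_one
    by (intro set_integral_mono set_integrable_subset[OF Cmajorant_integrable]) auto
  also have "\<dots> = 15 * (h * ((1 - ln h)\<^sup>2 + 2 * (1 - ln h) + 2))"
    using assms log_square by simp
  also have "\<dots> \<le> 75 * h * (1 - ln h)\<^sup>2"
  proof -
    define M where "M = 1 - ln h"
    have "1 \<le> M"
      using assms by (simp add: M_def)
    then have "M\<^sup>2 + 2 * M + 2 \<le> 5 * M\<^sup>2"
      using self_le_power[of M 2] by linarith
    then have "15 * h * (M\<^sup>2 + 2 * M + 2) \<le> 15 * h * (5 * M\<^sup>2)"
      using assms by (intro mult_left_mono) auto
    then show ?thesis
      unfolding M_def by simp
  qed
  finally show ?thesis .
qed

lemma Cf_integrable:
  shows "set_integrable lborel {0<..<1} Cf"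
    and "set_integrable lborel {0<..<1} (\<lambda>v. v * Cf v)"
proof -
  have "\<bar>Cf v\<bar> \<le> \<bar>Cmajorant v\<bar>" if "0 < v" "v < 1" for v
    using abs_Cf_le_Cmajorant[OF that] by linarith
  moreover have "\<bar>v * Cf v\<bar> \<le> \<bar>Cf v\<bar>" if "0 < v" "v < 1" for v
    using that by (simp add: abs_mult mult_left_le_one_le)
  ultimately have "\<bar>v * Cf v\<bar> \<le> \<bar>Cmajorant v\<bar>" "\<bar>Cf v\<bar> \<le> \<bar>Cmajorant v\<bar>"
    if "0 < v" "v < 1" for v
    using that by (auto intro: order_trans)
  then show "set_integrable lborel {0<..<1} Cf" "set_integrable lborel {0<..<1} (\<lambda>v. v * Cf v)"
    by (auto intro!: set_integrable_bound[OF Cmajorant_integrable] AE_I2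
        simp: set_borel_measurable_def)
qed

lemma Cf_shift_le:
  assumes "0 < v" "0 < h" "v + h < 1"
  shows "\<bar>Cf (v + h) - Cf v\<bar> \<le> Cmajorant (v + h) - Cmajorant v + 2 * (ln (1 + h / v) * Af v)"
proof -
  have "ln (1 + h / v) = ln (1 / v) - ln (1 / (v + h))"
    using assms by (simp add: ln_div field_simps)
  moreover have "0 \<le> ln (1 / (v + h))" "ln (1 / (v + h)) \<le> ln (1 / v)"
    using assms by (simp_all add: ln_div)
  moreover have "0 \<le> Af v" "Af v \<le> Af (v + h)" "Bf v \<le> Bf (v + h)"
    using assms Af_nonneg Af_mono Bf_mono by auto
  ultimately show ?thesis
    using abs_diff_le_of_monotone[of "ln (1 / (v + h))" "ln (1 / v)" "Af v" "Af (v + h)" "Bf v" "Bf (v + h)"]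
      Cf_eq(2)[of v] Cf_eq(2)[of "v + h"] assms
    unfolding Cmajorant_def by simp
qed

lemma ln_shift_times_Af_le_near_one:
  assumes "0 < h" "1/2 < v" "v < 1 - h"
  shows "ln (1 + h / v) * Af v \<le> 10 * h * ((1 - ln (1 - v)) / (1 - v))"
proof -
  have "ln (1 + h / v) \<le> h / v"
    using assms by (intro ln_add_one_self_le_self) auto
  also have "\<dots> \<le> h / (1/2)"
    using assms by (intro divide_left_mono) auto
  finally have "ln (1 + h / v) * Af v \<le> h / (1/2) * (5 * (1 - ln (1 - v)) / (1 - v))"
    using Af_near_one(2)[of v] Af_nonneg[of v] assms by (intro mult_mono) auto
  also have "\<dots> = 10 * h * ((1 - ln (1 - v)) / (1 - v))"
    by simp
  finally show ?thesis .
qed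

lemma integral_ln_shift_times_Af:
  assumes "0 < h" "h \<le> 1/4"
  shows "set_integrable lborel {0<..<1-h} (\<lambda>v. ln (1 + h / v) * Af v)"
    and "(LBINT v:{0<..<1-h}. ln (1 + h / v) * Af v) \<le> Af (1/2) * h * (1 - ln h) + 5 * h * (1 - ln h)\<^sup>2"
proof -
  note near_zero = integral_ln_one_plus_inverse(1)[of "1/2" h] integral_ln_one_plus_inverse_half_le[of h]
  note near_one = integral_ln_over_one_minus_le[of h]
  have near_zero_bound: "0 \<le> ln (1 + h / v) * Af v \<and> ln (1 + h / v) * Af v \<le> Af (1/2) * ln (1 + h / v)"
    if "0 < v" "v < 1/2" for v
  proof -
    have "0 \<le> ln (1 + h / v)"
      using that assms by simp
    moreover have "0 \<le> Af v" "Af v \<le> Af (1/2)"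
      using Af_nonneg Af_mono[of v "1/2"] that by auto
    ultimately show ?thesis
      by (metis mult.commute mult_left_mono mult_nonneg_nonneg)
  qed
  have near_one_bound:
    "0 \<le> ln (1 + h / v) * Af v \<and> ln (1 + h / v) * Af v \<le> 10 * h * ((1 - ln (1 - v)) / (1 - v))"
    if "1/2 < v" "v < 1 - h" for v
    using ln_shift_times_Af_le_near_one[of h v] Af_nonneg[of v] that assms by simp
  have measurable: "(\<lambda>v. ln (1 + h / v) * Af v) \<in> borel_measurable borel"
    by measurable
  have "set_integrable lborel {0<..<1/2} (\<lambda>v. Af (1/2) * ln (1 + h / v))"
    using near_zero(1) assms by simp
  moreover have "set_integrable lborel {1/2<..<1-h} (\<lambda>v. 10 * h * ((1 - ln (1 - v)) / (1 - v)))"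
    using near_one(1) assms by (intro set_integrable_mult_right) auto
  ultimately have split: "set_integrable lborel {0<..<1-h} (\<lambda>v. ln (1 + h / v) * Af v)"
    "(LBINT v:{0<..<1-h}. ln (1 + h / v) * Af v) \<le> (LBINT v:{0<..<1/2}. Af (1/2) * ln (1 + h / v))
      + (LBINT v:{1/2<..<1-h}. 10 * h * ((1 - ln (1 - v)) / (1 - v)))"
    using set_integral_Ioo_le_split[of 0 "1/2" "1 - h", OF _ _ measurable _ _ near_zero_bound near_one_bound]
      assms
    by auto
  show "set_integrable lborel {0<..<1-h} (\<lambda>v. ln (1 + h / v) * Af v)"
    by (rule split(1))
  have "(LBINT v:{0<..<1/2}. Af (1/2) * ln (1 + h / v)) \<le> Af (1/2) * (h * (1 - ln h))"
    using near_zero(2) Af_nonneg[of "1/2"] assms by (simp add: mult_left_mono)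
  moreover have "(LBINT v:{1/2<..<1-h}. 10 * h * ((1 - ln (1 - v)) / (1 - v))) \<le> 10 * h * ((1 - ln h)\<^sup>2 / 2)"
    using near_one(2) assms by (subst set_integral_mult_right) (intro mult_left_mono; simp)
  ultimately show "(LBINT v:{0<..<1-h}. ln (1 + h / v) * Af v) \<le> Af (1/2) * h * (1 - ln h) + 5 * h * (1 - ln h)\<^sup>2"
    using split(2) by (simp add: mult.assoc)
qed

lemma L1_modulus_Cf_le:
  assumes "0 < h" "h \<le> 1/4"
  shows "L1_modulus Cf h \<le> (160 + 2 * Af (1/2)) * h * (1 - ln h)\<^sup>2"
proof -
  note shift_error = integral_ln_shift_times_Af[OF assms]
  have "L1_modulus Cf h
      \<le> 2 * (LBINT v:{1-h<..<1}. Cmajorant v) + (LBINT v:{0<..<1-h}. 2 * (ln (1 + h / v) * Af v))"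
    using assms shift_error(1) abs_Cf_le_Cmajorant Cf_shift_le Cmajorant_integrable
    by (intro L1_modulus_le_telescoping) auto
  also have "\<dots> \<le> 2 * (75 * h * (1 - ln h)\<^sup>2) + 2 * (Af (1/2) * h * (1 - ln h) + 5 * h * (1 - ln h)\<^sup>2)"
    using integral_Cmajorant_near_one[of h] shift_error(2) assms
    by (subst set_integral_mult_right) (intro add_mono mult_left_mono; simp)
  also have "\<dots> \<le> (160 + 2 * Af (1/2)) * h * (1 - ln h)\<^sup>2"
  proof -
    define M where "M = 1 - ln h"
    have "1 \<le> M"
      using assms by (simp add: M_def)
    then have "Af (1/2) * h * M \<le> Af (1/2) * h * M\<^sup>2"
      using self_le_power[of M 2] Af_nonneg[of "1/2"] assms by (intro mult_left_mono) auto
    then show ?thesis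
      unfolding M_def[symmetric] by (simp add: algebra_simps)
  qed
  finally show ?thesis .
qed

lemma L1_modulus_times_id_Cf_le:
  assumes "0 < h" "h \<le> 1/4"
  shows "L1_modulus (\<lambda>v. v * Cf v) h
    \<le> (160 + 2 * Af (1/2) + (LBINT v:{0<..<1}. \<bar>Cf v\<bar>)) * h * (1 - ln h)\<^sup>2"
proof -
  have "L1_modulus (\<lambda>v. v * Cf v) h \<le> L1_modulus Cf h + h * (LBINT v:{0<..<1}. \<bar>Cf v\<bar>)"
    using L1_modulus_times_id_le[OF Cf_integrable(1)] assms by simp
  also have "\<dots> \<le> (160 + 2 * Af (1/2)) * h * (1 - ln h)\<^sup>2 + h * (1 - ln h)\<^sup>2 * (LBINT v:{0<..<1}. \<bar>Cf v\<bar>)"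
  proof (rule add_mono)
    have "h * 1 \<le> h * (1 - ln h)\<^sup>2"
      using assms by (intro mult_left_mono) (auto simp: one_le_power)
    moreover have "0 \<le> (LBINT v:{0<..<1}. \<bar>Cf v\<bar>)"
      unfolding set_lebesgue_integral_def by (intro integral_nonneg_AE) auto
    ultimately show "h * (LBINT v:{0<..<1}. \<bar>Cf v\<bar>) \<le> h * (1 - ln h)\<^sup>2 * (LBINT v:{0<..<1}. \<bar>Cf v\<bar>)"
      by (intro mult_right_mono) auto
  qed (rule L1_modulus_Cf_le[OF assms])
  also have "\<dots> = (160 + 2 * Af (1/2) + (LBINT v:{0<..<1}. \<bar>Cf v\<bar>)) * h * (1 - ln h)\<^sup>2"
    by (simp add: algebra_simps)
  finally show ?thesis .
qed

theorem lemma7: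
  shows "(\<forall>v. 0 < v \<and> v < 1 \<longrightarrow> set_integrable lborel {1<..} (Cint v))
     \<and> set_integrable lborel {1<..} (\<lambda>u. Lf u / u ^ 4)
     \<and> set_integrable lborel {1<..} (\<lambda>u. Lf u * ln (1 / u) / u ^ 4)
     \<and> (\<lambda>v. Cf v - c0 * ln (1 / v) - d0) \<in> O[at_right 0](\<lambda>v. v\<^sup>2 * ln (1 / v))
     \<and> set_integrable lborel {0<..<1} Cf
     \<and> set_integrable lborel {0<..<1} (\<lambda>v. v * Cf v)
     \<and> (\<lambda>y. LBINT v:{0<..<1}. Cf v * cos (v * y)) \<in> O[at_top](\<lambda>y. (ln y)\<^sup>2 / y)
     \<and> (\<lambda>y. LBINT v:{0<..<1}. v * Cf v * sin (v * y)) \<in> O[at_top](\<lambda>y. (ln y)\<^sup>2 / y)"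
proof (intro conjI)
  have [measurable]: "(cos :: real \<Rightarrow> real) \<in> borel_measurable borel"
    by measurable
  have [measurable]: "(sin :: real \<Rightarrow> real) \<in> borel_measurable borel"
    by measurable
  show "\<forall>v. 0 < v \<and> v < 1 \<longrightarrow> set_integrable lborel {1<..} (Cint v)"
    using Cf_eq(1) by auto
  show "(\<lambda>y. LBINT v:{0<..<1}. Cf v * cos (v * y)) \<in> O[at_top](\<lambda>y. (ln y)\<^sup>2 / y)"
    using L1_modulus_Cf_le
    by (intro antiperiodic_transform_bigo_of_L1_modulus[OF Cf_integrable(1)]) auto
  show "(\<lambda>y. LBINT v:{0<..<1}. v * Cf v * sin (v * y)) \<in> O[at_top](\<lambda>y. (ln y)\<^sup>2 / y)"
    using L1_modulus_times_id_Cf_le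
    by (intro antiperiodic_transform_bigo_of_L1_modulus[OF Cf_integrable(2)]) auto
qed (fact c0_d0_integrable Cf_expansion_at_zero Cf_integrable)+

end
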